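(* Consider the general LPP model described in the context, fix $\eta_0\in(0,\infty)$, $u\in\mathbb{R}$, set $\eta=\eta_0+ut^{-2/3}$, and suppose Assumptions A2 and A3 hold. Let $D$ be a probability distribution. If, as $t\to\infty$, $$\frac{\tilde L_{\mathcal{L}^-\to(\eta t,t)}-\mu t}{t^{1/3}}-\frac{\tilde L_{\mathcal{L}^+\to E^+}-\mu t+\mu_0t^\nu}{t^{1/3}}\Rightarrow D,$$ then also $$\frac{\tilde L_{\mathcal{L}^-\to(\eta t,t)}-\mu t}{t^{1/3}}-\frac{\tilde L_{\mathcal{L}^+\to E^+}+L_{E^+\to(\eta t,t)}-\mu t}{t^{1/3}}\Rightarrow D.$$
   Context: LPP: for independent nonnegative $\{\omega_{i,j}\}$, an up-right path is a sequence of points of $\mathbb{Z}^2$ with increments in $\{(1,0),(0,1)\}$; $L_{S_A\to S_E}=\max_\pi\sum_{(i,j)\in\pi\setminus S_A}\omega_{i,j}$ over up-right paths from $S_A$ to $S_E$ ($-\infty$ if none); $\pi^{\max}_{L_{A\to B}}$ is the a.s. unique maximizing path; non-integer coordinates are understood as integer parts. General model: integers $x_k(0)$, $k\in\mathbb{Z}$, with $x_{k+1}(0)<x_k(0)$, $x_0(0)=1$, $x_1(0)<-1$; $\omega_{i,j}$ independent exponential with rate $v_j>0$; $\mathcal{L}^+=\{(k+x_k(0),k):k>0\}$, $\mathcal{L}^-=\{(k+x_k(0),k):k\le0\}$. Let $\mu\in\mathbb{R}$ and $G_1(\cdot;u)$ be a continuous distribution function. Assumption A2: there exist $\kappa,\mu_0\in\mathbb{R}$,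 $\nu\in(1/3,1)$ and a continuous distribution function $G_0(\cdot;u)$ such that, with $E^+=(\eta t-\kappa t^\nu,t-t^\nu)$, for all $s$: $\lim_{t\to\infty}\mathbb{P}((L_{E^+\to(\eta t,t)}-\mu_0t^\nu)/t^{\nu/3}\le s)=G_0(s;u)$ and $\lim_{t\to\infty}\mathbb{P}((L_{\mathcal{L}^+\to E^+}-\mu t+\mu_0t^\nu)/t^{1/3}\le s)=G_1(s;u)$. Assumption A3: for some $\beta\in(0,\nu)$, with $D_\gamma=(\lfloor\gamma\eta t\rfloor,\lfloor\gamma t\rfloor)$: $\lim_{t\to\infty}\mathbb{P}(\bigcup_{\gamma\in[0,1-t^{\beta-1}]}\{D_\gamma\in\pi^{\max}_{L_{\mathcal{L}^+\to E^+}}\})=0$ and $\lim_{t\to\infty}\mathbb{P}(\bigcup_{\gamma\in[0,1-t^{\beta-1}]}\{D_\gamma\in\pi^{\max}_{L_{\mathcal{L}^-\to(\eta t,t)}}\})=0$. $\tilde L_{B\to C}$ is defined like $L_{B\to C}$ but maximizing only over up-right paths containing none of the points $D_\gamma$, $\gamma\in[0,1-t^{\beta-1}]$. "$\Rightarrow$" denotes convergence in distribution. *)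

theory Defs
  imports "HOL-Probability.Probability"
begin

type_synonym pt = "int \<times> int"

definition up_right :: "pt list \<Rightarrow> bool" where
  "up_right p \<longleftrightarrow> p \<noteq> [] \<and>
     (\<forall>i. Suc i < length p \<longrightarrow>
        (fst (p ! Suc i) = fst (p ! i) + 1 \<and> snd (p ! Suc i) = snd (p ! i)) \<or>
        (fst (p ! Suc i) = fst (p ! i) \<and> snd (p ! Suc i) = snd (p ! i) + 1))"

definition paths_avoid :: "pt set \<Rightarrow> pt set \<Rightarrow> pt set \<Rightarrow> pt list set" where
  "paths_avoid F A B = {p. up_right p \<and> hd p \<in> A \<and> last p \<in> B \<and> set p \<inter> F = {}}"

definition path_weight :: "(pt \<Rightarrow> real) \<Rightarrow> pt set \<Rightarrow> pt list \<Rightarrow> real" where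
  "path_weight w A p = sum w (set p - A)"

text \<open>Last passage value from A to B maximizing over paths avoiding F
  (supremum in the extended reals; it is -\<infinity> if no such path exists).\<close>
definition lpp_avoid :: "pt set \<Rightarrow> pt set \<Rightarrow> pt set \<Rightarrow> (pt \<Rightarrow> real) \<Rightarrow> ereal" where
  "lpp_avoid F A B w = (SUP p \<in> paths_avoid F A B. ereal (path_weight w A p))"

definition lpp :: "pt set \<Rightarrow> pt set \<Rightarrow> (pt \<Rightarrow> real) \<Rightarrow> ereal" where
  "lpp A B w = lpp_avoid {} A B w"

definition is_max_path :: "pt set \<Rightarrow> pt set \<Rightarrow> (pt \<Rightarrow> real) \<Rightarrow> pt list \<Rightarrow> bool" where
  "is_max_path A B w p \<longleftrightarrow> p \<in> paths_avoid {} A B \<and> ereal (path_weight w A p) = lpp A B w"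

definition cont_distr_fun :: "(real \<Rightarrow> real) \<Rightarrow> bool" where
  "cont_distr_fun F \<longleftrightarrow> continuous_on UNIV F \<and> mono F \<and>
     (F \<longlongrightarrow> 0) at_bot \<and> (F \<longlongrightarrow> 1) at_top"

definition conv_distr :: "'a measure \<Rightarrow> (real \<Rightarrow> 'a \<Rightarrow> ereal) \<Rightarrow> real measure \<Rightarrow> bool" where
  "conv_distr M X D \<longleftrightarrow>
     (\<forall>s. isCont (cdf D) s \<longrightarrow>
        ((\<lambda>t. measure M {\<omega> \<in> space M. X t \<omega> \<le> ereal s}) \<longlongrightarrow> cdf D s) at_top)"


text \<open>Geometry of the model; non-integer coordinates are replaced by their integer parts (floor).\<close>
definition eta :: "real \<Rightarrow> real \<Rightarrow> real \<Rightarrow> real" where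
  "eta \<eta>0 u t = \<eta>0 + u * t powr (-2/3)"

definition Lplus :: "(int \<Rightarrow> int) \<Rightarrow> pt set" where
  "Lplus x = {(k + x k, k) | k. k > 0}"

definition Lminus :: "(int \<Rightarrow> int) \<Rightarrow> pt set" where
  "Lminus x = {(k + x k, k) | k. k \<le> 0}"

definition Eplus :: "real \<Rightarrow> real \<Rightarrow> real \<Rightarrow> real \<Rightarrow> real \<Rightarrow> pt" where
  "Eplus \<eta>0 u \<kappa> \<nu> t = (\<lfloor>eta \<eta>0 u t * t - \<kappa> * t powr \<nu>\<rfloor>, \<lfloor>t - t powr \<nu>\<rfloor>)"

definition Pend :: "real \<Rightarrow> real \<Rightarrow> real \<Rightarrow> pt" where
  "Pend \<eta>0 u t = (\<lfloor>eta \<eta>0 u t * t\<rfloor>, \<lfloor>t\<rfloor>)"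

definition Dset :: "real \<Rightarrow> real \<Rightarrow> real \<Rightarrow> real \<Rightarrow> pt set" where
  "Dset \<eta>0 u \<beta> t = {(\<lfloor>\<gamma> * eta \<eta>0 u t * t\<rfloor>, \<lfloor>\<gamma> * t\<rfloor>) | \<gamma>. 0 \<le> \<gamma> \<and> \<gamma> \<le> 1 - t powr (\<beta> - 1)}"

end

theory Submission
  imports Defs
begin

text \<open>Write X t and Y t for the two rescaled differences. Wherever the passage time
  L(E+ \<rightarrow> (\<eta> t, t)) is finite, X t - Y t = Z t * t powr ((\<nu> - 1) / 3), where Z t is
  the rescaling of that passage time in the first half of Assumption A2. Since Z t converges in
  distribution it is tight, and \<nu> < 1, so X t - Y t \<rightarrow> 0 in probability. A Slutsky-type
  argument then carries the limit D over from X t to Y t. Apart from measurability of the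
  weights, no other hypothesis of the theorem is needed.\<close>

lemma ereal_diff_add_shift:
  fixes a b :: ereal and r \<delta> :: real
  assumes "\<bar>r\<bar> \<le> \<delta>"
  shows "a - (b + ereal r) \<le> a - b + ereal \<delta>" and "a - b \<le> a - (b + ereal r) + ereal \<delta>"
  using assms by (cases a; cases b; simp add: abs_le_iff)+

lemma ereal_add_diff_divide:
  fixes b :: ereal and c l m n :: real
  assumes "c > 0"
  shows "(b + ereal l - ereal m) / ereal c = (b - ereal m + ereal n) / ereal c + ereal ((l - n) / c)"
  using assms by (cases b) (simp_all add: field_simps)

lemma ereal_diff_divide_perturb:
  fixes a b L :: ereal and c c' m n K \<delta> :: real
  assumes "c > 0" "c' > 0" "\<bar>(L - ereal n) / ereal c'\<bar> \<le> ereal K" "K * (c' / c) \<le> \<delta>"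
  shows "a - (b + L - ereal m) / ereal c \<le> a - (b - ereal m + ereal n) / ereal c + ereal \<delta>
       \<and> a - (b - ereal m + ereal n) / ereal c \<le> a - (b + L - ereal m) / ereal c + ereal \<delta>"
proof -
  obtain l where L: "L = ereal l" and "\<bar>(l - n) / c'\<bar> \<le> K"
    using assms(2,3) by (cases L) auto
  then have "\<bar>(l - n) / c\<bar> \<le> \<delta>"
    using assms(1,2,4) by (simp add: abs_divide field_simps)
  then show ?thesis
    unfolding L ereal_add_diff_divide[OF assms(1), of b l m n]
    using ereal_diff_add_shift by blast
qed

lemma ereal_abs_le_iff: "\<bar>z\<bar> \<le> ereal K \<longleftrightarrow> ereal (- K) \<le> z \<and> z \<le> ereal K"
  by (cases z) auto

text \<open>Two inequalities rather than a bound on the difference X t \<omega> - Y t \<omega>,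
  since the variables may take the values \<plusminus>\<infinity>.\<close>
definition close_in_prob :: "'a measure \<Rightarrow> (real \<Rightarrow> 'a \<Rightarrow> ereal) \<Rightarrow> (real \<Rightarrow> 'a \<Rightarrow> ereal) \<Rightarrow> bool" where
  "close_in_prob M X Y \<longleftrightarrow>
     (\<forall>\<delta>>0. \<forall>e>0. \<forall>\<^sub>F t in at_top. \<exists>G\<in>sets M. measure M (space M - G) < e \<and>
        (\<forall>\<omega>\<in>G. Y t \<omega> \<le> X t \<omega> + ereal \<delta> \<and> X t \<omega> \<le> Y t \<omega> + ereal \<delta>))"

lemma (in prob_space) prob_le_prob_add_prob_compl:
  assumes "A \<subseteq> space M" "B \<in> events" "G \<in> events" "A \<inter> G \<subseteq> B"
  shows "prob A \<le> prob B + prob (space M - G)"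
proof -
  have "prob A \<le> prob (B \<union> (space M - G))"
    using assms by (intro finite_measure_mono) auto
  also have "\<dots> \<le> prob B + prob (space M - G)"
    using assms by (intro measure_Un_le) auto
  finally show ?thesis .
qed

lemma (in prob_space) tight_if_cdf_tendsto:
  fixes Z :: "real \<Rightarrow> 'a \<Rightarrow> ereal" and G :: "real \<Rightarrow> real"
  assumes Z_meas: "\<And>t. Z t \<in> borel_measurable M"
    and Z_cdf: "\<And>s. ((\<lambda>t. prob {\<omega> \<in> space M. Z t \<omega> \<le> ereal s}) \<longlongrightarrow> G s) at_top"
    and G_bot: "(G \<longlongrightarrow> 0) at_bot" and G_top: "(G \<longlongrightarrow> 1) at_top"
    and "e > 0"
  obtains K where "K > 0" "\<forall>\<^sub>F t in at_top. prob {\<omega> \<in> space M. \<not> \<bar>Z t \<omega>\<bar> \<le> ereal K} < e"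
proof -
  obtain K1 where K1: "\<And>y. y \<le> K1 \<Longrightarrow> G y < e / 3"
    using order_tendstoD(2)[OF G_bot, of "e / 3"] \<open>e > 0\<close> by (auto simp: eventually_at_bot_linorder)
  obtain K2 where K2: "\<And>y. y \<ge> K2 \<Longrightarrow> G y > 1 - e / 3"
    using order_tendstoD(1)[OF G_top, of "1 - e / 3"] \<open>e > 0\<close> by (auto simp: eventually_at_top_linorder)
  define K where "K = max 1 (max (- K1) K2)"
  have "K > 0" "- K \<le> K1" "K2 \<le> K"
    unfolding K_def by auto
  then have K: "K > 0" "G (- K) < e / 3" "G K > 1 - 2 * e / 3"
    using K1[of "- K"] K2[of K] \<open>e > 0\<close> by auto
  moreover have "\<forall>\<^sub>F t in at_top. prob {\<omega> \<in> space M. \<not> \<bar>Z t \<omega>\<bar> \<le> ereal K} < e"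
    using order_tendstoD(2)[OF Z_cdf[of "- K"] K(2)] order_tendstoD(1)[OF Z_cdf[of K] K(3)]
  proof eventually_elim
    case (elim t)
    let ?low = "{\<omega> \<in> space M. Z t \<omega> \<le> ereal (- K)}" and ?high = "{\<omega> \<in> space M. Z t \<omega> \<le> ereal K}"
    have events: "?low \<in> events" "?high \<in> events"
      using Z_meas by measurable
    have "{\<omega> \<in> space M. \<not> \<bar>Z t \<omega>\<bar> \<le> ereal K} \<subseteq> ?low \<union> (space M - ?high)"
      by (auto simp: ereal_abs_le_iff)
    then have "prob {\<omega> \<in> space M. \<not> \<bar>Z t \<omega>\<bar> \<le> ereal K} \<le> prob ?low + prob (space M - ?high)"
      using events by (intro prob_le_prob_add_prob_compl) auto
    then show ?case
      using elim events by (simp add: prob_compl)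
  qed
  ultimately show ?thesis using that by blast
qed

lemma (in prob_space) close_in_prob_if_tight_remainder:
  fixes Z :: "real \<Rightarrow> 'a \<Rightarrow> ereal" and G f :: "real \<Rightarrow> real"
  assumes Z_meas: "\<And>t. Z t \<in> borel_measurable M"
    and Z_cdf: "\<And>s. ((\<lambda>t. prob {\<omega> \<in> space M. Z t \<omega> \<le> ereal s}) \<longlongrightarrow> G s) at_top"
    and G_bot: "(G \<longlongrightarrow> 0) at_bot" and G_top: "(G \<longlongrightarrow> 1) at_top"
    and f: "(f \<longlongrightarrow> 0) at_top"
    and close: "\<forall>\<^sub>F t in at_top. \<forall>\<omega> K \<delta>. \<bar>Z t \<omega>\<bar> \<le> ereal K \<longrightarrow> K * f t \<le> \<delta> \<longrightarrow>
                  Y t \<omega> \<le> X t \<omega> + ereal \<delta> \<and> X t \<omega> \<le> Y t \<omega> + ereal \<delta>"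
  shows "close_in_prob M X Y"
  unfolding close_in_prob_def
proof (intro allI impI)
  fix \<delta> e :: real assume "\<delta> > 0" "e > 0"
  obtain K where "K > 0" and tight: "\<forall>\<^sub>F t in at_top. prob {\<omega> \<in> space M. \<not> \<bar>Z t \<omega>\<bar> \<le> ereal K} < e"
    using tight_if_cdf_tendsto[OF Z_meas Z_cdf G_bot G_top \<open>e > 0\<close>] by blast
  have small: "\<forall>\<^sub>F t in at_top. \<bar>f t\<bar> < \<delta> / K"
    using tendstoD[OF f, of "\<delta> / K"] \<open>\<delta> > 0\<close> \<open>K > 0\<close> by (simp add: dist_real_def)
  show "\<forall>\<^sub>F t in at_top. \<exists>G\<in>sets M. prob (space M - G) < e \<and>
          (\<forall>\<omega>\<in>G. Y t \<omega> \<le> X t \<omega> + ereal \<delta> \<and> X t \<omega> \<le> Y t \<omega> + ereal \<delta>)"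
    using tight small close
  proof eventually_elim
    case (elim t)
    let ?G = "{\<omega> \<in> space M. \<bar>Z t \<omega>\<bar> \<le> ereal K}"
    have "?G \<in> events"
      using Z_meas by measurable
    moreover have "space M - ?G = {\<omega> \<in> space M. \<not> \<bar>Z t \<omega>\<bar> \<le> ereal K}"
      by blast
    moreover have "K * f t \<le> \<delta>"
      using elim(2) \<open>K > 0\<close> by (simp add: field_simps abs_less_iff)
    ultimately show ?case
      using elim(1,3) by (intro bexI[of _ ?G]) auto
  qed
qed

lemma (in prob_space) prob_le_shifted_prob_add_prob_compl:
  fixes X Y :: "'a \<Rightarrow> ereal"
  assumes "Y \<in> borel_measurable M" "G \<in> events" "\<And>\<omega>. \<omega> \<in> G \<Longrightarrow> Y \<omega> \<le> X \<omega> + ereal \<delta>" "r + \<delta> \<le> r'"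
  shows "prob {\<omega> \<in> space M. X \<omega> \<le> ereal r} \<le> prob {\<omega> \<in> space M. Y \<omega> \<le> ereal r'} + prob (space M - G)"
proof (rule prob_le_prob_add_prob_compl)
  show "{\<omega> \<in> space M. Y \<omega> \<le> ereal r'} \<in> events"
    using assms(1) by measurable
  show "{\<omega> \<in> space M. X \<omega> \<le> ereal r} \<inter> G \<subseteq> {\<omega> \<in> space M. Y \<omega> \<le> ereal r'}"
  proof safe
    fix \<omega> assume "\<omega> \<in> G" "X \<omega> \<le> ereal r" "\<omega> \<in> space M"
    then have "Y \<omega> \<le> ereal r + ereal \<delta>"
      using assms(3) add_right_mono order_trans by blast
    also have "\<dots> \<le> ereal r'"
      using assms(4) by simp
    finally show "Y \<omega> \<le> ereal r'" .
  qed
qed (use assms(2) in auto)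

lemma (in real_distribution) isCont_cdf_point_between:
  assumes "a < b"
  obtains y where "a < y" "y < b" "isCont (cdf M) y"
proof -
  have "mono (cdf M)"
    by (simp add: mono_def cdf_nondecreasing)
  then show ?thesis
    using open_minus_countable[OF mono_ctble_discont, of "cdf M" "{a<..<b}"] assms that by auto
qed

lemma (in real_distribution) isCont_cdf_points_around:
  assumes "isCont (cdf M) s" "e > 0"
  obtains sl sh where "sl < s" "s < sh" "isCont (cdf M) sl" "isCont (cdf M) sh"
    "cdf M s - e \<le> cdf M sl" "cdf M sh \<le> cdf M s + e"
proof -
  obtain \<eta> where "\<eta> > 0" and cdf_near: "\<And>y. dist y s < \<eta> \<Longrightarrow> dist (cdf M y) (cdf M s) < e"
    using assms unfolding continuous_at_eps_delta by metis
  obtain sl where sl: "s - \<eta> < sl" "sl < s" "isCont (cdf M) sl"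
    using isCont_cdf_point_between[of "s - \<eta>" s] \<open>\<eta> > 0\<close> by auto
  obtain sh where sh: "s < sh" "sh < s + \<eta>" "isCont (cdf M) sh"
    using isCont_cdf_point_between[of s "s + \<eta>"] \<open>\<eta> > 0\<close> by auto
  show ?thesis
    using that[OF sl(2) sh(1) sl(3) sh(3)] cdf_near[of sl] cdf_near[of sh] sl sh
    by (auto simp: dist_real_def)
qed

lemma (in prob_space) conv_distr_close_in_prob:
  fixes X Y :: "real \<Rightarrow> 'a \<Rightarrow> ereal"
  assumes D: "real_distribution D"
    and X_meas: "\<And>t. X t \<in> borel_measurable M" and Y_meas: "\<And>t. Y t \<in> borel_measurable M"
    and X: "conv_distr M X D" and close: "close_in_prob M X Y"
  shows "conv_distr M Y D"
  unfolding conv_distr_def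
proof (intro allI impI)
  interpret D: real_distribution D by (rule D)
  fix s assume "isCont (cdf D) s"
  show "((\<lambda>t. prob {\<omega> \<in> space M. Y t \<omega> \<le> ereal s}) \<longlongrightarrow> cdf D s) at_top"
    unfolding tendsto_iff
  proof (intro allI impI)
    fix e :: real assume "e > 0"
    define e' where "e' = e / 4"
    have "e' > 0" using \<open>e > 0\<close> by (simp add: e'_def)
    obtain sl sh where sl: "sl < s" "isCont (cdf D) sl" and sh: "s < sh" "isCont (cdf D) sh"
      and cdf_sl: "cdf D s - e' \<le> cdf D sl" and cdf_sh: "cdf D sh \<le> cdf D s + e'"
      using D.isCont_cdf_points_around[OF \<open>isCont (cdf D) s\<close> \<open>e' > 0\<close>] by metis
    define \<delta> where "\<delta> = min (s - sl) (sh - s)"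
    have "\<delta> > 0" "sl + \<delta> \<le> s" "s + \<delta> \<le> sh"
      using sl sh by (auto simp: \<delta>_def)
    have X_conv: "\<forall>\<^sub>F t in at_top. dist (prob {\<omega> \<in> space M. X t \<omega> \<le> ereal r}) (cdf D r) < e'"
      if "isCont (cdf D) r" for r
      using X that \<open>e' > 0\<close> unfolding conv_distr_def tendsto_iff by blast
    have "\<forall>\<^sub>F t in at_top. \<exists>G\<in>sets M. prob (space M - G) < e' \<and>
            (\<forall>\<omega>\<in>G. Y t \<omega> \<le> X t \<omega> + ereal \<delta> \<and> X t \<omega> \<le> Y t \<omega> + ereal \<delta>)"
      using close \<open>\<delta> > 0\<close> \<open>e' > 0\<close> unfolding close_in_prob_def by blast
    with X_conv[OF sl(2)] X_conv[OF sh(2)]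
    show "\<forall>\<^sub>F t in at_top. dist (prob {\<omega> \<in> space M. Y t \<omega> \<le> ereal s}) (cdf D s) < e"
    proof eventually_elim
      case (elim t)
      then obtain G where "G \<in> events" "prob (space M - G) < e'"
        and G: "\<And>\<omega>. \<omega> \<in> G \<Longrightarrow> Y t \<omega> \<le> X t \<omega> + ereal \<delta> \<and> X t \<omega> \<le> Y t \<omega> + ereal \<delta>"
        by blast
      have lower: "prob {\<omega> \<in> space M. X t \<omega> \<le> ereal sl}
                     \<le> prob {\<omega> \<in> space M. Y t \<omega> \<le> ereal s} + prob (space M - G)"
        using G \<open>G \<in> events\<close> Y_meas \<open>sl + \<delta> \<le> s\<close> by (intro prob_le_shifted_prob_add_prob_compl) auto
      have upper: "prob {\<omega> \<in> space M. Y t \<omega> \<le> ereal s}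
                     \<le> prob {\<omega> \<in> space M. X t \<omega> \<le> ereal sh} + prob (space M - G)"
        using G \<open>G \<in> events\<close> X_meas \<open>s + \<delta> \<le> sh\<close> by (intro prob_le_shifted_prob_add_prob_compl) auto
      show ?case
        using lower upper elim(1,2) cdf_sl cdf_sh \<open>prob (space M - G) < e'\<close> measure_nonneg[of M "space M - G"]
        unfolding dist_real_def e'_def abs_less_iff by linarith
    qed
  qed
qed

lemma measurable_lpp_avoid [measurable]:
  assumes [measurable]: "\<And>q. W q \<in> borel_measurable M"
  shows "(\<lambda>\<omega>. lpp_avoid F A B (\<lambda>p. W p \<omega>)) \<in> borel_measurable M"
  unfolding lpp_avoid_def path_weight_def by measurable

lemma measurable_lpp [measurable]:
  assumes [measurable]: "\<And>q. W q \<in> borel_measurable M"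
  shows "(\<lambda>\<omega>. lpp A B (\<lambda>p. W p \<omega>)) \<in> borel_measurable M"
  unfolding lpp_def by measurable

lemma tendsto_powr_divide_powr_zero:
  fixes a b :: real
  assumes "a < b"
  shows "((\<lambda>t. t powr a / t powr b) \<longlongrightarrow> 0) at_top"
proof (rule Lim_transform_eventually)
  show "((\<lambda>t. t powr (a - b)) \<longlongrightarrow> 0) at_top"
    using assms by (intro tendsto_neg_powr filterlim_ident) auto
  show "\<forall>\<^sub>F t in at_top. t powr (a - b) = t powr a / t powr b"
    using eventually_gt_at_top[of 0] by eventually_elim (simp add: powr_diff)
qed

theorem proposition2p8:
  fixes M :: "'a measure"
    and W :: "pt \<Rightarrow> 'a \<Rightarrow> real"
    and v :: "int \<Rightarrow> real"
    and x :: "int \<Rightarrow> int"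
    and \<eta>0 u \<mu> \<kappa> \<mu>0 \<nu> \<beta> :: real
    and G0 G1 :: "real \<Rightarrow> real \<Rightarrow> real"
    and D :: "real measure"
  assumes M: "prob_space M"
    and W_indep: "prob_space.indep_vars M (\<lambda>_. borel) W UNIV"
    and v_pos: "\<And>j. v j > 0"
    and W_exp: "\<And>i j. distributed M lborel (W (i, j)) (exponential_density (v j))"
    and x_decr: "\<And>k. x (k + 1) < x k"
    and x0: "x 0 = 1"
    and x1: "x 1 < -1"
    and \<eta>0_pos: "\<eta>0 > 0"
    and G1: "cont_distr_fun (\<lambda>s. G1 s u)"
    \<comment> \<open>Assumption A2\<close>
    and \<nu>: "1/3 < \<nu>" "\<nu> < 1"
    and G0: "cont_distr_fun (\<lambda>s. G0 s u)"
    and A2_1: "\<And>s. ((\<lambda>t. measure M {\<omega> \<in> space M.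
                 (lpp {Eplus \<eta>0 u \<kappa> \<nu> t} {Pend \<eta>0 u t} (\<lambda>p. W p \<omega>) - ereal (\<mu>0 * t powr \<nu>))
                   / ereal (t powr (\<nu> / 3)) \<le> ereal s}) \<longlongrightarrow> G0 s u) at_top"
    and A2_2: "\<And>s. ((\<lambda>t. measure M {\<omega> \<in> space M.
                 (lpp (Lplus x) {Eplus \<eta>0 u \<kappa> \<nu> t} (\<lambda>p. W p \<omega>) - ereal (\<mu> * t) + ereal (\<mu>0 * t powr \<nu>))
                   / ereal (t powr (1 / 3)) \<le> ereal s}) \<longlongrightarrow> G1 s u) at_top"
    \<comment> \<open>Assumption A3\<close>
    and \<beta>: "0 < \<beta>" "\<beta> < \<nu>"
    and A3_1: "((\<lambda>t. measure M {\<omega> \<in> space M.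
                 \<exists>p. is_max_path (Lplus x) {Eplus \<eta>0 u \<kappa> \<nu> t} (\<lambda>q. W q \<omega>) p \<and> set p \<inter> Dset \<eta>0 u \<beta> t \<noteq> {}})
               \<longlongrightarrow> 0) at_top"
    and A3_2: "((\<lambda>t. measure M {\<omega> \<in> space M.
                 \<exists>p. is_max_path (Lminus x) {Pend \<eta>0 u t} (\<lambda>q. W q \<omega>) p \<and> set p \<inter> Dset \<eta>0 u \<beta> t \<noteq> {}})
               \<longlongrightarrow> 0) at_top"
    \<comment> \<open>D is a probability distribution\<close>
    and D: "real_distribution D"
    and hyp: "conv_distr M (\<lambda>t \<omega>.
                (lpp_avoid (Dset \<eta>0 u \<beta> t) (Lminus x) {Pend \<eta>0 u t} (\<lambda>p. W p \<omega>) - ereal (\<mu> * t)) / ereal (t powr (1/3))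
              - (lpp_avoid (Dset \<eta>0 u \<beta> t) (Lplus x) {Eplus \<eta>0 u \<kappa> \<nu> t} (\<lambda>p. W p \<omega>) - ereal (\<mu> * t) + ereal (\<mu>0 * t powr \<nu>))
                  / ereal (t powr (1/3))) D"
  shows "conv_distr M (\<lambda>t \<omega>.
                (lpp_avoid (Dset \<eta>0 u \<beta> t) (Lminus x) {Pend \<eta>0 u t} (\<lambda>p. W p \<omega>) - ereal (\<mu> * t)) / ereal (t powr (1/3))
              - (lpp_avoid (Dset \<eta>0 u \<beta> t) (Lplus x) {Eplus \<eta>0 u \<kappa> \<nu> t} (\<lambda>p. W p \<omega>) + lpp {Eplus \<eta>0 u \<kappa> \<nu> t} {Pend \<eta>0 u t} (\<lambda>p. W p \<omega>)
                   - ereal (\<mu> * t)) / ereal (t powr (1/3))) D"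
proof -
  interpret prob_space M by (rule M)
  have W_meas [measurable]: "W q \<in> borel_measurable M" for q
    using distributed_measurable[OF W_exp] by (cases q) simp
  have G0_lim: "((\<lambda>s. G0 s u) \<longlongrightarrow> 0) at_bot" "((\<lambda>s. G0 s u) \<longlongrightarrow> 1) at_top"
    using G0 unfolding cont_distr_fun_def by auto
  define LM where "LM t \<omega> = lpp_avoid (Dset \<eta>0 u \<beta> t) (Lminus x) {Pend \<eta>0 u t} (\<lambda>p. W p \<omega>)" for t \<omega>
  define LP where "LP t \<omega> = lpp_avoid (Dset \<eta>0 u \<beta> t) (Lplus x) {Eplus \<eta>0 u \<kappa> \<nu> t} (\<lambda>p. W p \<omega>)" for t \<omega>
  define L where "L t \<omega> = lpp {Eplus \<eta>0 u \<kappa> \<nu> t} {Pend \<eta>0 u t} (\<lambda>p. W p \<omega>)" for t \<omega>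
  define X where "X t \<omega> = (LM t \<omega> - ereal (\<mu> * t)) / ereal (t powr (1/3))
              - (LP t \<omega> - ereal (\<mu> * t) + ereal (\<mu>0 * t powr \<nu>)) / ereal (t powr (1/3))" for t \<omega>
  define Y where "Y t \<omega> = (LM t \<omega> - ereal (\<mu> * t)) / ereal (t powr (1/3))
              - (LP t \<omega> + L t \<omega> - ereal (\<mu> * t)) / ereal (t powr (1/3))" for t \<omega>
  define Z where "Z t \<omega> = (L t \<omega> - ereal (\<mu>0 * t powr \<nu>)) / ereal (t powr (\<nu> / 3))" for t \<omega>
  have L_meas: "(\<lambda>\<omega>. LM t \<omega>) \<in> borel_measurable M" "(\<lambda>\<omega>. LP t \<omega>) \<in> borel_measurable M"
      "(\<lambda>\<omega>. L t \<omega>) \<in> borel_measurable M" for t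
    unfolding LM_def LP_def L_def by (intro measurable_lpp_avoid measurable_lpp W_meas)+
  have "\<forall>\<^sub>F t in at_top. \<forall>\<omega> K \<delta>. \<bar>Z t \<omega>\<bar> \<le> ereal K \<longrightarrow> K * (t powr (\<nu> / 3) / t powr (1 / 3)) \<le> \<delta> \<longrightarrow>
          Y t \<omega> \<le> X t \<omega> + ereal \<delta> \<and> X t \<omega> \<le> Y t \<omega> + ereal \<delta>"
    using eventually_gt_at_top[of "0::real"]
    unfolding X_def Y_def Z_def by eventually_elim (intro allI impI ereal_diff_divide_perturb; simp)
  then have close: "close_in_prob M X Y"
    using \<nu> unfolding Z_def L_def
    by (intro close_in_prob_if_tight_remainder[OF _ A2_1 G0_lim tendsto_powr_divide_powr_zero]) auto
  have X_conv: "conv_distr M X D"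
    using hyp unfolding X_def LM_def LP_def .
  have XY_meas: "(\<lambda>\<omega>. X t \<omega>) \<in> borel_measurable M" "(\<lambda>\<omega>. Y t \<omega>) \<in> borel_measurable M" for t
    unfolding X_def Y_def
    by (intro borel_measurable_ereal_diff borel_measurable_ereal_divide borel_measurable_ereal_add
        borel_measurable_const L_meas)+
  have "conv_distr M Y D"
    using conv_distr_close_in_prob[OF D XY_meas X_conv close] .
  then show ?thesis
    unfolding Y_def LM_def LP_def L_def .
qed

end
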